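(* Let $\phi,\chi,\psi$ be Dirichlet characters of conductors $h,k,q$ respectively, and let $a,b$ be positive integers forming an admissible index (i.e. such that all the limits and series below converge). Assume $\phi\chi\psi(-1)=(-1)^{a+b+1}$. Then $$\tau(\overline{\phi})\,\tau(\overline{\chi})\,\tau(\overline{\psi})\,L(0,a,b\,;\phi,\chi,\psi)=\sum_{j=1}^{h-1}\sum_{l=1}^{k-1}\sum_{r=1}^{q-1}\overline{\phi}(j)\,\overline{\chi}(l)\,\overline{\psi}(r)\,U\!\left(a,b\,;\tfrac{j}{h}+\tfrac{r}{q},\tfrac{l}{k}+\tfrac{r}{q}\right).$$
   Context: For real $x,y$, $T(0,a,b\,;x,y):=\lim_{R\to\infty}\sum_{m,n\ge1,\ m+n\le R}\frac{e^{2\pi i m x}e^{2\pi i n y}}{n^a (m+n)^b}$ (the Lerch type Tornheim double zeta function at $(0,a,b)$), and $U$ is defined by $2U(a,b\,;x,y):=T(0,a,b\,;x,y)-(-1)^{a+b}T(0,a,b\,;-x,-y)$. Further, $$L(0,a,b\,;\phi,\chi,\psi):=\lim_{R\to\infty}\sum_{m,n\ge1,\ m+n\le R}\frac{\phi(m)\chi(n)\psi(m+n)}{n^a(m+n)^b},$$ and for a character $\chi$ of conductor $k$ the Gauss sum is $\tau(\chi):=\sum_{l=1}^{k-1}\chi(l)e^{2\pi i l/k}$. *)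

theory Defs
  imports "HOL-Analysis.Analysis"
begin

definition dirichlet_char :: "nat \<Rightarrow> (int \<Rightarrow> complex) \<Rightarrow> bool" where
  "dirichlet_char k \<theta> \<longleftrightarrow> k > 0 \<and> \<theta> 1 = 1 \<and>
     (\<forall>m n. \<theta> (m * n) = \<theta> m * \<theta> n) \<and>
     (\<forall>n. \<theta> (n + int k) = \<theta> n) \<and>
     (\<forall>n. \<theta> n = 0 \<longleftrightarrow> \<not> coprime n (int k))"

text \<open>Primitive character modulo k (i.e. a character of conductor k): there is no
  proper divisor d of k such that chi(n) = 1 whenever n = 1 mod d and n coprime to k.\<close>
definition primitive_char :: "nat \<Rightarrow> (int \<Rightarrow> complex) \<Rightarrow> bool" where
  "primitive_char k \<theta> \<longleftrightarrow> dirichlet_char k \<theta> \<and>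
     \<not> (\<exists>d. d dvd k \<and> d < k \<and>
          (\<forall>n. coprime n (int k) \<and> n mod int d = 1 mod int d \<longrightarrow> \<theta> n = 1))"

definition gauss_sum :: "nat \<Rightarrow> (int \<Rightarrow> complex) \<Rightarrow> complex" where
  "gauss_sum k \<theta> = (\<Sum>l = 1..int k - 1. \<theta> l * exp (2 * of_real pi * \<i> * of_int l / of_nat k))"

definition tri :: "nat \<Rightarrow> (nat \<times> nat) set" where
  "tri R = {(m, n). 1 \<le> m \<and> 1 \<le> n \<and> m + n \<le> R}"

definition T0_partial :: "nat \<Rightarrow> nat \<Rightarrow> real \<Rightarrow> real \<Rightarrow> nat \<Rightarrow> complex" where
  "T0_partial a b x y R = (\<Sum>(m, n)\<in>tri R.
      exp (2 * of_real pi * \<i> * of_nat m * of_real x) *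
      exp (2 * of_real pi * \<i> * of_nat n * of_real y) /
      (of_nat n ^ a * of_nat (m + n) ^ b))"

definition T0 :: "nat \<Rightarrow> nat \<Rightarrow> real \<Rightarrow> real \<Rightarrow> complex" where
  "T0 a b x y = lim (T0_partial a b x y)"

definition U :: "nat \<Rightarrow> nat \<Rightarrow> real \<Rightarrow> real \<Rightarrow> complex" where
  "U a b x y = (T0 a b x y - (-1) ^ (a + b) * T0 a b (- x) (- y)) / 2"

definition L0_partial :: "nat \<Rightarrow> nat \<Rightarrow> (int \<Rightarrow> complex) \<Rightarrow> (int \<Rightarrow> complex) \<Rightarrow>
    (int \<Rightarrow> complex) \<Rightarrow> nat \<Rightarrow> complex" where
  "L0_partial a b \<phi> \<theta> \<psi> R = (\<Sum>(m, n)\<in>tri R.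
      \<phi> (int m) * \<theta> (int n) * \<psi> (int (m + n)) / (of_nat n ^ a * of_nat (m + n) ^ b))"

definition L0 :: "nat \<Rightarrow> nat \<Rightarrow> (int \<Rightarrow> complex) \<Rightarrow> (int \<Rightarrow> complex) \<Rightarrow>
    (int \<Rightarrow> complex) \<Rightarrow> complex" where
  "L0 a b \<phi> \<theta> \<psi> = lim (L0_partial a b \<phi> \<theta> \<psi>)"

end

theory Submission
  imports Defs "HOL-Number_Theory.Number_Theory"
begin

text \<open>For a primitive character \<open>\<theta>\<close> mod \<open>k\<close> one has
  \<open>\<Sum>l. cnj (\<theta> l) e(l n / k) = \<theta> n \<tau>(cnj \<theta>)\<close> for every integer \<open>n\<close>: for \<open>n\<close> coprime to \<open>k\<close>
  substitute \<open>l \<mapsto> l n\<close>, otherwise primitivity forces both sides to vanish. Expanding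
  \<open>\<phi>(m) \<tau>(cnj \<phi>)\<close>, \<open>\<theta>(n) \<tau>(cnj \<theta>)\<close> and \<open>\<psi>(m + n) \<tau>(cnj \<psi>)\<close> this way turns each triangular
  partial sum of \<open>\<tau>\<tau>\<tau> L\<close> into the corresponding combination of partial sums of \<open>T\<close>, and the
  identity passes to the limit. The reflection \<open>(j, l, r) \<mapsto> (h - j, k - l, q - r)\<close> shows that
  the \<open>T(-x, -y)\<close> half of \<open>U\<close> contributes \<open>cnj (\<phi>\<theta>\<psi>(-1))\<close> times the same sum, which by the
  parity hypothesis is exactly the \<open>T(x, y)\<close> half.\<close>

lemma dirichlet_char_pos: "dirichlet_char k \<theta> \<Longrightarrow> k > 0"
  by (simp add: dirichlet_char_def)

lemma dirichlet_char_one: "dirichlet_char k \<theta> \<Longrightarrow> \<theta> 1 = 1"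
  by (simp add: dirichlet_char_def)

lemma dirichlet_char_mult: "dirichlet_char k \<theta> \<Longrightarrow> \<theta> (m * n) = \<theta> m * \<theta> n"
  by (simp add: dirichlet_char_def)

lemma dirichlet_char_eq_0_iff: "dirichlet_char k \<theta> \<Longrightarrow> \<theta> n = 0 \<longleftrightarrow> \<not> coprime n (int k)"
  by (simp add: dirichlet_char_def)

lemma dirichlet_char_periodic:
  assumes "dirichlet_char k \<theta>"
  shows "\<theta> (n + int k * t) = \<theta> n"
proof (induction t rule: int_induct[where k = 0])
  case base
  show ?case by simp
next
  case (step1 i)
  have "\<theta> (n + int k * (i + 1)) = \<theta> ((n + int k * i) + int k)"
    by (simp add: algebra_simps)
  with step1 assms show ?case by (simp add: dirichlet_char_def)
next
  case (step2 i)
  have "\<theta> (n + int k * i) = \<theta> ((n + int k * (i - 1)) + int k)"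
    by (simp add: algebra_simps)
  with step2 assms show ?case by (simp add: dirichlet_char_def)
qed

lemma dirichlet_char_cong:
  assumes "dirichlet_char k \<theta>" "[a = b] (mod int k)"
  shows "\<theta> a = \<theta> b"
proof -
  obtain t where "b = a + int k * t" using assms(2) by (auto simp: cong_iff_lin)
  then show ?thesis using dirichlet_char_periodic[OF assms(1)] by simp
qed

lemma dirichlet_char_power:
  assumes "dirichlet_char k \<theta>"
  shows "\<theta> (n ^ N) = \<theta> n ^ N"
  using assms by (induction N) (auto simp: dirichlet_char_def)

lemma dirichlet_char_norm:
  assumes "dirichlet_char k \<theta>" "coprime n (int k)"
  shows "norm (\<theta> n) = 1"
proof -
  have kpos: "k > 0" using dirichlet_char_pos[OF assms(1)] .
  define r where "r = nat (n mod int k)"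
  have r: "int r = n mod int k" using kpos by (simp add: r_def)
  have "coprime (n mod int k) (int k)" using assms(2) kpos by simp
  then have "coprime r k" using r by (metis coprime_int_iff)
  then have "[int r ^ totient k = 1] (mod int k)"
    by (metis euler_theorem cong_int_iff of_nat_1 of_nat_power)
  then have "\<theta> (int r ^ totient k) = \<theta> 1" by (rule dirichlet_char_cong[OF assms(1)])
  moreover have "\<theta> n = \<theta> (int r)"
    using r dirichlet_char_cong[OF assms(1)] by (metis cong_mod_right cong_refl)
  ultimately have "\<theta> n ^ totient k = 1"
    by (simp add: dirichlet_char_power[OF assms(1)] dirichlet_char_one[OF assms(1)])
  then have "norm (\<theta> n) ^ totient k = 1" by (metis norm_one norm_power)
  moreover have "totient k > 0" using kpos by simp
  ultimately show ?thesis using power_eq_imp_eq_base[of "norm (\<theta> n)" "totient k" 1] by simp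
qed

lemma dirichlet_char_diff:
  assumes "dirichlet_char k \<theta>" "j \<le> k"
  shows "\<theta> (int (k - j)) = \<theta> (-1) * \<theta> (int j)"
proof -
  have "\<theta> (int (k - j)) = \<theta> (- int j + int k * 1)" using assms(2) by simp
  also have "\<dots> = \<theta> ((-1) * int j)"
    using dirichlet_char_periodic[OF assms(1), of "- int j" 1] by simp
  also have "\<dots> = \<theta> (-1) * \<theta> (int j)" by (rule dirichlet_char_mult[OF assms(1)])
  finally show ?thesis .
qed

lemma sum_residues_mult_coprime:
  fixes g :: "int \<Rightarrow> 'a::comm_monoid_add"
  assumes "k > 0" and periodic: "\<And>a b. [a = b] (mod int k) \<Longrightarrow> g a = g b"
    and "coprime c (int k)"
  shows "(\<Sum>l\<in>{0..<int k}. g (l * c)) = (\<Sum>l\<in>{0..<int k}. g l)"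
proof -
  define \<sigma> where "\<sigma> l = (l * c) mod int k" for l
  have "inj_on \<sigma> {0..<int k}"
  proof
    fix x y assume "x \<in> {0..<int k}" "y \<in> {0..<int k}" "\<sigma> x = \<sigma> y"
    moreover from \<open>\<sigma> x = \<sigma> y\<close> have "[x = y] (mod int k)"
      using assms(3) by (metis \<sigma>_def cong_def cong_mult_rcancel)
    ultimately show "x = y" using cong_less_imp_eq_int by auto
  qed
  moreover have "\<sigma> ` {0..<int k} \<subseteq> {0..<int k}" using assms(1) by (auto simp: \<sigma>_def)
  ultimately have bij: "bij_betw \<sigma> {0..<int k} {0..<int k}"
    by (simp add: bij_betw_def endo_inj_surj)
  have "(\<Sum>l\<in>{0..<int k}. g (l * c)) = (\<Sum>l\<in>{0..<int k}. g (\<sigma> l))"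
    by (intro sum.cong refl periodic) (simp add: \<sigma>_def cong_def)
  also have "\<dots> = (\<Sum>l\<in>{0..<int k}. g l)" by (rule sum.reindex_bij_betw[OF bij])
  finally show ?thesis .
qed

definition root_of_unity_pow :: "nat \<Rightarrow> int \<Rightarrow> complex" where
  "root_of_unity_pow k a = exp (2 * of_real pi * \<i> * of_int a / of_nat k)"

lemma root_of_unity_pow_cong:
  assumes "k > 0" "[a = b] (mod int k)"
  shows "root_of_unity_pow k a = root_of_unity_pow k b"
proof -
  obtain t where t: "b = a + int k * t" using assms(2) by (auto simp: cong_iff_lin)
  have "2 * of_real pi * \<i> * of_int b / of_nat k
        = 2 * of_real pi * \<i> * of_int a / of_nat k + (2 * of_int t * pi) * \<i>"
    using assms(1) by (simp add: t field_simps)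
  then have "root_of_unity_pow k b = root_of_unity_pow k a * exp ((2 * of_int t * pi) * \<i>)"
    by (simp add: root_of_unity_pow_def exp_add)
  also have "exp ((2 * of_int t * pi) * \<i>) = 1" by (rule exp_integer_2pi) simp
  finally show ?thesis by simp
qed

definition twisted_gauss_sum :: "nat \<Rightarrow> (int \<Rightarrow> complex) \<Rightarrow> int \<Rightarrow> complex" where
  "twisted_gauss_sum k \<theta> n = (\<Sum>l\<in>{0..<int k}. cnj (\<theta> l) * root_of_unity_pow k (l * n))"

lemma twisted_gauss_sum_coprime:
  assumes char: "dirichlet_char k \<theta>" and "coprime n (int k)"
  shows "twisted_gauss_sum k \<theta> n = \<theta> n * twisted_gauss_sum k \<theta> 1"
proof -
  have kpos: "k > 0" using dirichlet_char_pos[OF char] .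
  define g where "g l = cnj (\<theta> l) * root_of_unity_pow k l" for l
  have "g a = g b" if "[a = b] (mod int k)" for a b
    using dirichlet_char_cong[OF char that] root_of_unity_pow_cong[OF kpos that]
    by (simp add: g_def)
  then have "(\<Sum>l\<in>{0..<int k}. g (l * n)) = (\<Sum>l\<in>{0..<int k}. g l)"
    by (rule sum_residues_mult_coprime[OF kpos _ assms(2)])
  moreover have "(\<Sum>l\<in>{0..<int k}. g (l * n)) = cnj (\<theta> n) * twisted_gauss_sum k \<theta> n"
    by (simp add: g_def twisted_gauss_sum_def sum_distrib_left dirichlet_char_mult[OF char] mult_ac)
  moreover have "(\<Sum>l\<in>{0..<int k}. g l) = twisted_gauss_sum k \<theta> 1"
    by (simp add: g_def twisted_gauss_sum_def)
  ultimately have *: "cnj (\<theta> n) * twisted_gauss_sum k \<theta> n = twisted_gauss_sum k \<theta> 1"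
    by simp
  have "\<theta> n * cnj (\<theta> n) = 1"
    using dirichlet_char_norm[OF assms] by (metis complex_norm_square of_real_1 power_one)
  then have "twisted_gauss_sum k \<theta> n = \<theta> n * (cnj (\<theta> n) * twisted_gauss_sum k \<theta> n)"
    by (simp only: mult.assoc [symmetric] mult_1)
  also have "\<dots> = \<theta> n * twisted_gauss_sum k \<theta> 1" by (simp only: *)
  finally show ?thesis .
qed

text \<open>Primitivity supplies a unit \<open>c \<equiv> 1 (mod k / gcd n k)\<close> with \<open>\<theta> c \<noteq> 1\<close>;
  substituting \<open>l \<mapsto> l c\<close> multiplies the sum by \<open>cnj (\<theta> c)\<close> and leaves it unchanged.\<close>
lemma twisted_gauss_sum_not_coprime:
  assumes prim: "primitive_char k \<theta>" and "\<not> coprime n (int k)"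
  shows "twisted_gauss_sum k \<theta> n = 0"
proof -
  have char: "dirichlet_char k \<theta>" using prim by (simp add: primitive_char_def)
  have kpos: "k > 0" using dirichlet_char_pos[OF char] .
  define d where "d = gcd n (int k)"
  define k' where "k' = nat (int k div d)"
  have "d > 0" "d \<noteq> 1" using kpos assms(2) by (simp_all add: d_def coprime_iff_gcd_eq_1)
  then have d2: "d \<ge> 2" by linarith
  have "d dvd int k" by (simp add: d_def)
  then have k: "int k = int k' * d" using \<open>d > 0\<close> by (simp add: k'_def pos_imp_zdiv_nonneg_iff)
  have "k' dvd k" using k by (metis dvd_triv_left int_dvd_int_iff)
  moreover have "k' < k"
  proof -
    have "int k' > 0" using k kpos \<open>d > 0\<close> by (cases "k' = 0") auto
    then have "int k' * 1 < int k' * d" using d2 by (intro mult_strict_left_mono) auto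
    then show ?thesis using k by simp
  qed
  ultimately obtain c where c: "coprime c (int k)" "c mod int k' = 1 mod int k'" "\<theta> c \<noteq> 1"
    using prim unfolding primitive_char_def by blast
  define g where "g l = cnj (\<theta> l) * root_of_unity_pow k (l * n)" for l
  have "g (l * c) = cnj (\<theta> c) * g l" for l
  proof -
    have "int k' dvd c - 1" using c(2) by (simp add: mod_eq_dvd_iff)
    moreover have "d dvd n" by (simp add: d_def)
    ultimately have "int k dvd (c - 1) * n" unfolding k by (rule mult_dvd_mono)
    moreover have "l * c * n - l * n = l * ((c - 1) * n)" by (simp add: algebra_simps)
    ultimately have "[l * c * n = l * n] (mod int k)" by (simp add: cong_iff_dvd_diff)
    then have "root_of_unity_pow k (l * c * n) = root_of_unity_pow k (l * n)"
      by (rule root_of_unity_pow_cong[OF kpos])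
    then show ?thesis by (simp add: g_def dirichlet_char_mult[OF char])
  qed
  moreover have "(\<Sum>l\<in>{0..<int k}. g (l * c)) = (\<Sum>l\<in>{0..<int k}. g l)"
  proof (rule sum_residues_mult_coprime[OF kpos _ c(1)])
    fix a b assume ab: "[a = b] (mod int k)"
    then have "[a * n = b * n] (mod int k)" by (rule cong_mult) simp
    then have "root_of_unity_pow k (a * n) = root_of_unity_pow k (b * n)"
      by (rule root_of_unity_pow_cong[OF kpos])
    then show "g a = g b" using dirichlet_char_cong[OF char ab] by (simp add: g_def)
  qed
  ultimately have "cnj (\<theta> c) * (\<Sum>l\<in>{0..<int k}. g l) = (\<Sum>l\<in>{0..<int k}. g l)"
    by (simp add: sum_distrib_left)
  moreover have "cnj (\<theta> c) \<noteq> 1" using c(3) by (metis complex_cnj_one complex_cnj_cnj)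
  ultimately have "(\<Sum>l\<in>{0..<int k}. g l) = 0" by (metis mult_cancel_right1)
  then show ?thesis by (simp add: twisted_gauss_sum_def g_def)
qed

lemma twisted_gauss_sum_primitive:
  assumes prim: "primitive_char k \<theta>"
  shows "twisted_gauss_sum k \<theta> n = \<theta> n * twisted_gauss_sum k \<theta> 1"
proof -
  have char: "dirichlet_char k \<theta>" using prim by (simp add: primitive_char_def)
  show ?thesis
  proof (cases "coprime n (int k)")
    case True
    then show ?thesis by (rule twisted_gauss_sum_coprime[OF char])
  next
    case False
    then show ?thesis
      by (simp add: twisted_gauss_sum_not_coprime[OF prim] dirichlet_char_eq_0_iff[OF char])
  qed
qed

lemma twisted_gauss_sum_eq_sum_from_1:
  assumes char: "dirichlet_char k \<theta>" and "k \<ge> 2"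
  shows "twisted_gauss_sum k \<theta> n = (\<Sum>l = 1..<k. cnj (\<theta> (int l)) * root_of_unity_pow k (int l * n))"
proof -
  have "\<theta> 0 = 0" using assms(2) by (simp add: dirichlet_char_eq_0_iff[OF char])
  moreover have "{0..<int k} = insert 0 {1..<int k}" using assms(2) by auto
  ultimately have "twisted_gauss_sum k \<theta> n =
      (\<Sum>l\<in>{1..<int k}. cnj (\<theta> l) * root_of_unity_pow k (l * n))"
    by (simp add: twisted_gauss_sum_def)
  also have "{1..<int k} = int ` {1..<k}" by (simp add: image_int_atLeastLessThan)
  finally show ?thesis by (simp add: sum.reindex)
qed

abbreviation exp2pi :: "nat \<Rightarrow> real \<Rightarrow> complex" where
  "exp2pi n x \<equiv> exp (2 * of_real pi * \<i> * of_nat n * of_real x)"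

lemma root_of_unity_pow_eq_exp2pi:
  "root_of_unity_pow k (int l * int n) = exp2pi n (real l / real k)"
  unfolding root_of_unity_pow_def by (simp add: mult.commute mult.left_commute)

lemma primitive_char_times_gauss_sum:
  assumes prim: "primitive_char k \<theta>"
  shows "\<theta> (int n) * gauss_sum k (\<lambda>n. cnj (\<theta> n)) =
     (\<Sum>l = 1..<k. cnj (\<theta> (int l)) * exp2pi n (real l / real k))"
proof -
  have char: "dirichlet_char k \<theta>" using prim by (simp add: primitive_char_def)
  show ?thesis
  proof (cases "k = 1")
    case True
    then show ?thesis by (simp add: gauss_sum_def)
  next
    case False
    with dirichlet_char_pos[OF char] have k2: "k \<ge> 2" by simp
    have "{1..int k - 1} = int ` {1..<k}" by (auto simp: image_int_atLeastLessThan)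
    then have "gauss_sum k (\<lambda>n. cnj (\<theta> n)) =
        (\<Sum>l\<in>int ` {1..<k}. cnj (\<theta> l) * root_of_unity_pow k (l * 1))"
      by (simp add: gauss_sum_def root_of_unity_pow_def)
    also have "\<dots> = twisted_gauss_sum k \<theta> 1"
      by (simp add: sum.reindex twisted_gauss_sum_eq_sum_from_1[OF char k2])
    finally have "\<theta> (int n) * gauss_sum k (\<lambda>n. cnj (\<theta> n)) = \<theta> (int n) * twisted_gauss_sum k \<theta> 1"
      by simp
    also have "\<dots> = twisted_gauss_sum k \<theta> (int n)"
      by (rule twisted_gauss_sum_primitive[OF prim, symmetric])
    also have "\<dots> = (\<Sum>l = 1..<k. cnj (\<theta> (int l)) * exp2pi n (real l / real k))"
      by (simp add: twisted_gauss_sum_eq_sum_from_1[OF char k2] root_of_unity_pow_eq_exp2pi)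
    finally show ?thesis .
  qed
qed

lemma exp2pi_add_int: "exp2pi m (x + of_int t) = exp2pi m x"
proof -
  have "2 * of_real pi * \<i> * of_nat m * of_real (x + of_int t) =
        2 * of_real pi * \<i> * of_nat m * of_real x + (2 * of_int (int m * t) * pi) * \<i>"
    by (simp add: algebra_simps)
  then have "exp2pi m (x + of_int t) = exp2pi m x * exp ((2 * of_int (int m * t) * pi) * \<i>)"
    by (simp only: exp_add)
  also have "exp ((2 * of_int (int m * t) * pi) * \<i>) = 1" by (rule exp_integer_2pi) simp
  finally show ?thesis by simp
qed

lemma exp2pi_mult_sum_freq:
  "exp2pi m x * exp2pi n y * exp2pi (m + n) z = exp2pi m (x + z) * exp2pi n (y + z)"
  by (simp only: exp_add[symmetric]) (simp add: algebra_simps)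

lemma T0_add_int: "T0 a b (x + of_int s) (y + of_int t) = T0 a b x y"
  unfolding T0_def T0_partial_def exp2pi_add_int ..

lemma sum_case_prod_swap3:
  fixes F :: "'a \<Rightarrow> 'b \<Rightarrow> 'c \<Rightarrow> 'd \<Rightarrow> 'e \<Rightarrow> 'f::comm_monoid_add"
  shows "(\<Sum>(m, n)\<in>T. \<Sum>j\<in>A. \<Sum>l\<in>B. \<Sum>r\<in>C. F j l r m n) =
   (\<Sum>j\<in>A. \<Sum>l\<in>B. \<Sum>r\<in>C. \<Sum>(m, n)\<in>T. F j l r m n)"
proof -
  have swap: "(\<Sum>(m, n)\<in>T. \<Sum>j\<in>S. H m n j) = (\<Sum>j\<in>S. \<Sum>(m, n)\<in>T. H m n j)"
    for S and H :: "'d \<Rightarrow> 'e \<Rightarrow> 'g \<Rightarrow> 'f"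
    by (simp only: split_def) (rule sum.swap)
  show ?thesis by (simp only: swap)
qed

lemma sum_product3:
  fixes f :: "'a \<Rightarrow> 'd::comm_semiring_0"
  shows "sum f A * sum g B * sum h C = (\<Sum>i\<in>A. \<Sum>j\<in>B. \<Sum>k\<in>C. f i * g j * h k)"
proof -
  have "sum f A * sum g B * sum h C = (\<Sum>i\<in>A. \<Sum>j\<in>B. f i * g j) * sum h C"
    by (simp only: sum_product[of f A g B])
  also have "\<dots> = (\<Sum>i\<in>A. \<Sum>j\<in>B. f i * g j * sum h C)" by (simp only: sum_distrib_right)
  finally show ?thesis by (simp only: sum_distrib_left)
qed

lemma gauss_sums_times_char_product:
  assumes "primitive_char h \<phi>" "primitive_char k \<theta>" "primitive_char q \<psi>"
  shows "(\<phi> (int m) * gauss_sum h (\<lambda>n. cnj (\<phi> n))) * (\<theta> (int n) * gauss_sum k (\<lambda>n. cnj (\<theta> n))) *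
           (\<psi> (int (m + n)) * gauss_sum q (\<lambda>n. cnj (\<psi> n))) =
         (\<Sum>j = 1..<h. \<Sum>l = 1..<k. \<Sum>r = 1..<q.
            cnj (\<phi> (int j)) * cnj (\<theta> (int l)) * cnj (\<psi> (int r)) *
            (exp2pi m (real j / real h + real r / real q) *
             exp2pi n (real l / real k + real r / real q)))"
proof -
  have regroup: "(u * x) * (v * y) * (w * z) = u * v * w * (x * y * z)" for u v w x y z :: complex
    by (simp only: ac_simps)
  show ?thesis
    unfolding primitive_char_times_gauss_sum[OF assms(1)]
      primitive_char_times_gauss_sum[OF assms(2)]
      primitive_char_times_gauss_sum[OF assms(3)] sum_product3
    by (simp only: regroup exp2pi_mult_sum_freq)
qed

lemma gauss_sums_times_L0_partial:
  assumes "primitive_char h \<phi>" "primitive_char k \<theta>" "primitive_char q \<psi>"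
  shows "gauss_sum h (\<lambda>n. cnj (\<phi> n)) * gauss_sum k (\<lambda>n. cnj (\<theta> n)) *
           gauss_sum q (\<lambda>n. cnj (\<psi> n)) * L0_partial a b \<phi> \<theta> \<psi> R =
         (\<Sum>j = 1..<h. \<Sum>l = 1..<k. \<Sum>r = 1..<q.
            cnj (\<phi> (int j)) * cnj (\<theta> (int l)) * cnj (\<psi> (int r)) *
            T0_partial a b (real j / real h + real r / real q)
              (real l / real k + real r / real q) R)"
    (is "?lhs = ?rhs")
proof -
  have "?lhs = (\<Sum>(m, n)\<in>tri R.
      (\<phi> (int m) * gauss_sum h (\<lambda>n. cnj (\<phi> n))) * (\<theta> (int n) * gauss_sum k (\<lambda>n. cnj (\<theta> n))) *
      (\<psi> (int (m + n)) * gauss_sum q (\<lambda>n. cnj (\<psi> n))) / (of_nat n ^ a * of_nat (m + n) ^ b))"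
    unfolding L0_partial_def by (simp add: sum_distrib_left case_prod_beta mult_ac)
  also have "\<dots> = (\<Sum>(m, n)\<in>tri R. \<Sum>j = 1..<h. \<Sum>l = 1..<k. \<Sum>r = 1..<q.
      cnj (\<phi> (int j)) * cnj (\<theta> (int l)) * cnj (\<psi> (int r)) *
      (exp2pi m (real j / real h + real r / real q) * exp2pi n (real l / real k + real r / real q) /
       (of_nat n ^ a * of_nat (m + n) ^ b)))"
    unfolding gauss_sums_times_char_product[OF assms]
    by (simp only: sum_divide_distrib times_divide_eq_right)
  also have "\<dots> = ?rhs"
    unfolding sum_case_prod_swap3 T0_partial_def by (simp only: sum_distrib_left split_def)
  finally show ?thesis .
qed

lemma gauss_sums_times_L0:
  assumes "primitive_char h \<phi>" "primitive_char k \<theta>" "primitive_char q \<psi>"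
    and "convergent (L0_partial a b \<phi> \<theta> \<psi>)"
    and "\<And>j l r. j \<in> {1..<h} \<Longrightarrow> l \<in> {1..<k} \<Longrightarrow> r \<in> {1..<q} \<Longrightarrow>
        convergent (T0_partial a b (real j / real h + real r / real q)
                                   (real l / real k + real r / real q))"
  shows "gauss_sum h (\<lambda>n. cnj (\<phi> n)) * gauss_sum k (\<lambda>n. cnj (\<theta> n)) *
           gauss_sum q (\<lambda>n. cnj (\<psi> n)) * L0 a b \<phi> \<theta> \<psi> =
         (\<Sum>j = 1..<h. \<Sum>l = 1..<k. \<Sum>r = 1..<q.
            cnj (\<phi> (int j)) * cnj (\<theta> (int l)) * cnj (\<psi> (int r)) *
            T0 a b (real j / real h + real r / real q) (real l / real k + real r / real q))"
proof (rule LIMSEQ_unique)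
  show "(\<lambda>R. gauss_sum h (\<lambda>n. cnj (\<phi> n)) * gauss_sum k (\<lambda>n. cnj (\<theta> n)) *
           gauss_sum q (\<lambda>n. cnj (\<psi> n)) * L0_partial a b \<phi> \<theta> \<psi> R) \<longlonglongrightarrow>
        gauss_sum h (\<lambda>n. cnj (\<phi> n)) * gauss_sum k (\<lambda>n. cnj (\<theta> n)) *
           gauss_sum q (\<lambda>n. cnj (\<psi> n)) * L0 a b \<phi> \<theta> \<psi>"
    using assms(4) unfolding L0_def convergent_LIMSEQ_iff by (rule tendsto_mult_left)
  show "(\<lambda>R. gauss_sum h (\<lambda>n. cnj (\<phi> n)) * gauss_sum k (\<lambda>n. cnj (\<theta> n)) *
           gauss_sum q (\<lambda>n. cnj (\<psi> n)) * L0_partial a b \<phi> \<theta> \<psi> R) \<longlonglongrightarrow>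
        (\<Sum>j = 1..<h. \<Sum>l = 1..<k. \<Sum>r = 1..<q.
            cnj (\<phi> (int j)) * cnj (\<theta> (int l)) * cnj (\<psi> (int r)) *
            T0 a b (real j / real h + real r / real q) (real l / real k + real r / real q))"
    unfolding gauss_sums_times_L0_partial[OF assms(1-3)]
    using assms(5) unfolding T0_def convergent_LIMSEQ_iff by (intro tendsto_sum tendsto_mult_left)
qed

lemma sum_atLeast1_lessThan_reflect: "(\<Sum>j = 1..<(N::nat). f j) = (\<Sum>j = 1..<N. f (N - j))"
  by (rule sum.reindex_bij_witness[of _ "\<lambda>j. N - j" "\<lambda>j. N - j"]) auto

text \<open>Reflecting \<open>(j, l, r) \<mapsto> (h - j, k - l, q - r)\<close> turns \<open>(-x, -y)\<close> into
  \<open>(x - 2, y - 2)\<close>, and \<open>T0\<close> is 1-periodic in both arguments.\<close>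
lemma sum_T0_reflect:
  assumes "dirichlet_char h \<phi>" "dirichlet_char k \<theta>" "dirichlet_char q \<psi>"
  shows "(\<Sum>j = 1..<h. \<Sum>l = 1..<k. \<Sum>r = 1..<q.
            cnj (\<phi> (int j)) * cnj (\<theta> (int l)) * cnj (\<psi> (int r)) *
            T0 a b (- (real j / real h + real r / real q))
                   (- (real l / real k + real r / real q))) =
         cnj (\<phi> (-1) * \<theta> (-1) * \<psi> (-1)) *
         (\<Sum>j = 1..<h. \<Sum>l = 1..<k. \<Sum>r = 1..<q.
            cnj (\<phi> (int j)) * cnj (\<theta> (int l)) * cnj (\<psi> (int r)) *
            T0 a b (real j / real h + real r / real q) (real l / real k + real r / real q))"
proof -
  have pos: "h > 0" "k > 0" "q > 0" using assms by (simp_all add: dirichlet_char_pos)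
  define c where "c j l r = cnj (\<phi> (int j)) * cnj (\<theta> (int l)) * cnj (\<psi> (int r))" for j l r
  define X where "X j r = real j / real h + real r / real q" for j r
  define Y where "Y l r = real l / real k + real r / real q" for l r
  define F where "F j l r = c j l r * T0 a b (- X j r) (- Y l r)" for j l r
  have "(\<Sum>j = 1..<h. \<Sum>l = 1..<k. \<Sum>r = 1..<q. F j l r) =
        (\<Sum>j = 1..<h. \<Sum>l = 1..<k. \<Sum>r = 1..<q. F (h - j) (k - l) (q - r))"
    by (subst sum_atLeast1_lessThan_reflect[of _ h], rule sum.cong[OF refl],
        subst sum_atLeast1_lessThan_reflect[of _ k], rule sum.cong[OF refl],
        subst sum_atLeast1_lessThan_reflect[of _ q], rule refl)
  also have "\<dots> = (\<Sum>j = 1..<h. \<Sum>l = 1..<k. \<Sum>r = 1..<q.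
      cnj (\<phi> (-1) * \<theta> (-1) * \<psi> (-1)) * (c j l r * T0 a b (X j r) (Y l r)))"
  proof (intro sum.cong refl)
    fix j l r assume "j \<in> {1..<h}" "l \<in> {1..<k}" "r \<in> {1..<q}"
    then have j: "j \<le> h" and l: "l \<le> k" and r: "r \<le> q" by simp_all
    have "c (h - j) (k - l) (q - r) = cnj (\<phi> (-1) * \<theta> (-1) * \<psi> (-1)) * c j l r"
      unfolding c_def dirichlet_char_diff[OF assms(1) j] dirichlet_char_diff[OF assms(2) l]
        dirichlet_char_diff[OF assms(3) r]
      by (simp only: complex_cnj_mult mult_ac)
    moreover have "- X (h - j) (q - r) = X j r + of_int (-2)"
      and "- Y (k - l) (q - r) = Y l r + of_int (-2)"
      using j l r pos by (simp_all add: X_def Y_def of_nat_diff field_simps)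
    ultimately show "F (h - j) (k - l) (q - r) =
        cnj (\<phi> (-1) * \<theta> (-1) * \<psi> (-1)) * (c j l r * T0 a b (X j r) (Y l r))"
      by (simp only: F_def T0_add_int mult.assoc)
  qed
  finally show ?thesis by (simp only: F_def c_def X_def Y_def sum_distrib_left)
qed

theorem proposition2:
  fixes h k q a b :: nat and \<phi> \<theta> \<psi> :: "int \<Rightarrow> complex"
  assumes "primitive_char h \<phi>" and "primitive_char k \<theta>" and "primitive_char q \<psi>"
    and "a \<ge> 1" and "b \<ge> 1"
    and convL: "convergent (L0_partial a b \<phi> \<theta> \<psi>)"
    and convT: "\<And>j l r. j \<in> {1..<h} \<Longrightarrow> l \<in> {1..<k} \<Longrightarrow> r \<in> {1..<q} \<Longrightarrow>
        convergent (T0_partial a b (real j / real h + real r / real q)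
                                   (real l / real k + real r / real q)) \<and>
        convergent (T0_partial a b (- (real j / real h + real r / real q))
                                   (- (real l / real k + real r / real q)))"
    and parity: "\<phi> (-1) * \<theta> (-1) * \<psi> (-1) = (-1) ^ (a + b + 1)"
  shows "gauss_sum h (\<lambda>n. cnj (\<phi> n)) * gauss_sum k (\<lambda>n. cnj (\<theta> n)) *
           gauss_sum q (\<lambda>n. cnj (\<psi> n)) * L0 a b \<phi> \<theta> \<psi> =
         (\<Sum>j = 1..<h. \<Sum>l = 1..<k. \<Sum>r = 1..<q.
            cnj (\<phi> (int j)) * cnj (\<theta> (int l)) * cnj (\<psi> (int r)) *
            U a b (real j / real h + real r / real q) (real l / real k + real r / real q))"
proof -
  define S where "S = (\<Sum>j = 1..<h. \<Sum>l = 1..<k. \<Sum>r = 1..<q.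
      cnj (\<phi> (int j)) * cnj (\<theta> (int l)) * cnj (\<psi> (int r)) *
      T0 a b (real j / real h + real r / real q) (real l / real k + real r / real q))"
  define S' where "S' = (\<Sum>j = 1..<h. \<Sum>l = 1..<k. \<Sum>r = 1..<q.
      cnj (\<phi> (int j)) * cnj (\<theta> (int l)) * cnj (\<psi> (int r)) *
      T0 a b (- (real j / real h + real r / real q)) (- (real l / real k + real r / real q)))"
  define s :: complex where "s = (-1) ^ (a + b)"
  have "s * s = 1" by (simp add: s_def power_mult_distrib[symmetric])
  have char: "dirichlet_char h \<phi>" "dirichlet_char k \<theta>" "dirichlet_char q \<psi>"
    using assms(1-3) by (simp_all add: primitive_char_def)
  have "cnj (\<phi> (-1) * \<theta> (-1) * \<psi> (-1)) = - s" by (simp add: parity s_def)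
  then have reflect: "S' = - s * S"
    unfolding S_def S'_def by (simp only: sum_T0_reflect[OF char])
  have "gauss_sum h (\<lambda>n. cnj (\<phi> n)) * gauss_sum k (\<lambda>n. cnj (\<theta> n)) *
      gauss_sum q (\<lambda>n. cnj (\<psi> n)) * L0 a b \<phi> \<theta> \<psi> = S"
    unfolding S_def by (rule gauss_sums_times_L0[OF assms(1-3) convL]) (use convT in blast)
  also have "\<dots> = (S - s * S') / 2" using \<open>s * s = 1\<close> by (simp add: reflect mult.assoc[symmetric])
  also have "\<dots> = (\<Sum>j = 1..<h. \<Sum>l = 1..<k. \<Sum>r = 1..<q.
      cnj (\<phi> (int j)) * cnj (\<theta> (int l)) * cnj (\<psi> (int r)) *
      U a b (real j / real h + real r / real q) (real l / real k + real r / real q))"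
    unfolding S_def S'_def U_def s_def[symmetric]
    by (simp only: sum_distrib_left sum_subtractf sum_divide_distrib diff_divide_distrib
        right_diff_distrib times_divide_eq_right mult.left_commute)
  finally show ?thesis .
qed

end
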